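(* Let $p\in\mathbb{R}_{\ge0}^n$ and $w\in\mathbb{R}_{\ge0}^n$ be arbitrary and let $t\ge0$. Then either $\Lambda(t)=\infty$ or there exists an index $i\in\{1,\ldots,n\}$ such that $\Lambda(t)=\Lambda^i(t)$.
   Context: Let $x^\star$ be a solution maximizing $p^{\mathsf T}x$ over $\{x\in\{0,1\}^n: w^{\mathsf T}x\le t\}$ (the winner), and let $\hat{x}$ be a solution minimizing $w^{\mathsf T}x$ over $\{x\in\{0,1\}^n: p^{\mathsf T}x>p^{\mathsf T}x^\star\}$ (the loser of smallest weight), with $\hat{x}=\perp$ if this set is empty. Define $\Lambda(t)=w^{\mathsf T}\hat{x}-t$ if $\hat{x}\ne\perp$ and $\Lambda(t)=\infty$ otherwise. For $i\in\{1,\ldots,n\}$ and $j\in\{0,1\}$ let $\mathcal{S}^{x_i=j}=\{x\in\{0,1\}^n: x_i=j\}$; let $x^{\star,i}$ maximize $p^{\mathsf T}x$ over $\{x\in\mathcal{S}^{x_i=0}: w^{\mathsf T}x\le t\}$, and let $\hat{x}^i$ minimize $w^{\mathsf T}x$ over $\{x\in\mathcal{S}^{x_i=1}: p^{\mathsf T}x>p^{\mathsf T}x^{\star,i}\}$, with $\hat{x}^i=\perp$ if this set is empty. Define $\Lambda^i(t)=w^{\mathsf T}\hat{x}^i-t$ if $\hat{x}^i\ne\perp$ and $\Lambda^i(t)=\infty$ otherwise. (These values do not depend on how ties in the argmax/argmin are broken.) *)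

theory Defs
  imports "HOL-Analysis.Analysis" "HOL-Library.Extended_Real"
begin

text \<open>Vectors in R^n are modelled as functions nat => real; only indices 0..n-1 matter.
  The binary cube {0,1}^n is modelled as functions that are 0 or 1 on {0..<n} and 0 elsewhere.\<close>

definition binvecs :: "nat \<Rightarrow> (nat \<Rightarrow> real) set" where
  "binvecs n = {x. (\<forall>i<n. x i = 0 \<or> x i = 1) \<and> (\<forall>i\<ge>n. x i = 0)}"

definition dotp :: "nat \<Rightarrow> (nat \<Rightarrow> real) \<Rightarrow> (nat \<Rightarrow> real) \<Rightarrow> real" where
  "dotp n a x = (\<Sum>i<n. a i * x i)"

text \<open>The feasible winner set is always nonempty (contains 0, as t >= 0, and 0 is in S^{x_i=0}).\<close>

definition LambdaGen ::
  "nat \<Rightarrow> (nat \<Rightarrow> real) \<Rightarrow> (nat \<Rightarrow> real) \<Rightarrow> real \<Rightarrow> (nat \<Rightarrow> real) set \<Rightarrow> (nat \<Rightarrow> real) set \<Rightarrow> ereal" where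
  "LambdaGen n p w t S0 S1 =
     (let xstar = (ARG_MAX (dotp n p) x. x \<in> S0 \<and> dotp n w x \<le> t);
          L = {x \<in> S1. dotp n p x > dotp n p xstar}
      in if L = {} then \<infinity>
         else ereal (dotp n w (ARG_MIN (dotp n w) x. x \<in> L) - t))"

definition Lambda :: "nat \<Rightarrow> (nat \<Rightarrow> real) \<Rightarrow> (nat \<Rightarrow> real) \<Rightarrow> real \<Rightarrow> ereal" where
  "Lambda n p w t = LambdaGen n p w t (binvecs n) (binvecs n)"

definition Lambda_i :: "nat \<Rightarrow> (nat \<Rightarrow> real) \<Rightarrow> (nat \<Rightarrow> real) \<Rightarrow> real \<Rightarrow> nat \<Rightarrow> ereal" where
  "Lambda_i n p w t i = LambdaGen n p w t {x \<in> binvecs n. x i = 0} {x \<in> binvecs n. x i = 1}"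

end

theory Submission
  imports Defs
begin

text \<open>Let \<open>x\<^sup>\<star>\<close> be the winner and \<open>x'\<close> a lightest loser. Since \<open>p \<ge> 0\<close> and
  \<open>p\<^sup>T x' > p\<^sup>T x\<^sup>\<star>\<close>, the vector \<open>x'\<close> is not coordinatewise below \<open>x\<^sup>\<star>\<close>, so some \<open>i\<close> has
  \<open>x'\<^sub>i = 1\<close> and \<open>x\<^sup>\<star>\<^sub>i = 0\<close>. Passing to the subcubes \<open>x\<^sub>i = 0\<close> (winners) and \<open>x\<^sub>i = 1\<close> (losers)
  keeps \<open>x\<^sup>\<star>\<close> a winner and \<open>x'\<close> a lightest loser, hence \<open>\<Lambda>\<^sup>i(t) = \<Lambda>(t)\<close>.\<close>

lemma finite_binvecs: "finite (binvecs n)"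
proof -
  have "binvecs n \<subseteq> {x. \<forall>i. (i \<in> {..<n} \<longrightarrow> x i \<in> {0, 1}) \<and> (i \<notin> {..<n} \<longrightarrow> x i = 0)}"
    unfolding binvecs_def by (auto simp: not_less)
  then show ?thesis by (rule finite_subset) (intro finite_set_of_finite_funs; simp)
qed

lemma dotp_mono:
  assumes "\<forall>i<n. 0 \<le> a i" and "\<forall>i<n. x i \<le> y i"
  shows "dotp n a x \<le> dotp n a y"
  unfolding dotp_def using assms by (intro sum_mono mult_left_mono) auto

lemma binvecs_dotp_less_imp_coordinate:
  assumes "x \<in> binvecs n" "y \<in> binvecs n" "\<forall>i<n. 0 \<le> a i"
    and "dotp n a x < dotp n a y"
  shows "\<exists>i<n. x i = 0 \<and> y i = 1"
proof (rule ccontr)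
  assume no_coordinate: "\<not> ?thesis"
  have "y i \<le> x i" if "i < n" for i
  proof -
    from assms(1,2) that have "x i = 0 \<or> x i = 1" "y i = 0 \<or> y i = 1"
      unfolding binvecs_def by auto
    with no_coordinate that show ?thesis by auto
  qed
  then have "dotp n a y \<le> dotp n a x" by (intro dotp_mono assms(3)) auto
  with assms(4) show False by simp
qed

lemma arg_max_value_eq_Max:
  fixes f :: "'a \<Rightarrow> 'b::linorder"
  assumes "finite {x. P x}" "P a"
  shows "f (arg_max f P) = Max (f ` {x. P x})"
proof -
  have "Max (f ` {x. P x}) \<in> f ` {x. P x}" using assms by (intro Max_in) auto
  then obtain k where k: "P k" "Max (f ` {x. P x}) = f k" by auto
  have "f x \<le> f k" if "P x" for x
    unfolding k(2)[symmetric] using assms(1) that by (intro Max_ge) auto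
  then show ?thesis unfolding k(2) by (rule arg_max_equality[of P k f, OF k(1)])
qed

lemma arg_min_value_eq_Min:
  fixes f :: "'a \<Rightarrow> 'b::linorder"
  assumes "finite {x. P x}" "P a"
  shows "f (arg_min f P) = Min (f ` {x. P x})"
proof -
  have "Min (f ` {x. P x}) \<in> f ` {x. P x}" using assms by (intro Min_in) auto
  then obtain k where k: "P k" "Min (f ` {x. P x}) = f k" by auto
  have "f k \<le> f x" if "P x" for x
    unfolding k(2)[symmetric] using assms(1) that by (intro Min_le) auto
  then show ?thesis unfolding k(2) by (rule arg_min_equality[of P k f, OF k(1)])
qed

lemma Max_image_subset_eq:
  fixes f :: "'a \<Rightarrow> 'b::linorder"
  assumes "finite B" "A \<subseteq> B" "a \<in> A" "f a = Max (f ` B)"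
  shows "Max (f ` A) = Max (f ` B)"
proof -
  have "Max (f ` A) = f a"
  proof (rule Max_eqI)
    show "finite (f ` A)" using finite_subset[OF assms(2,1)] by simp
    show "f a \<in> f ` A" using assms(3) by simp
    show "y \<le> f a" if "y \<in> f ` A" for y
      unfolding assms(4) using that assms(1,2) by (auto intro: Max_ge)
  qed
  then show ?thesis using assms(4) by (rule trans)
qed

lemma Min_image_subset_eq:
  fixes f :: "'a \<Rightarrow> 'b::linorder"
  assumes "finite B" "A \<subseteq> B" "a \<in> A" "f a = Min (f ` B)"
  shows "Min (f ` A) = Min (f ` B)"
proof -
  have "Min (f ` A) = f a"
  proof (rule Min_eqI)
    show "finite (f ` A)" using finite_subset[OF assms(2,1)] by simp
    show "f a \<in> f ` A" using assms(3) by simp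
    show "f a \<le> y" if "y \<in> f ` A" for y
      unfolding assms(4) using that assms(1,2) by (auto intro: Min_le)
  qed
  then show ?thesis using assms(4) by (rule trans)
qed

definition best_profit ::
  "nat \<Rightarrow> (nat \<Rightarrow> real) \<Rightarrow> (nat \<Rightarrow> real) \<Rightarrow> real \<Rightarrow> (nat \<Rightarrow> real) set \<Rightarrow> real"
  where "best_profit n p w t S = Max (dotp n p ` {x \<in> S. dotp n w x \<le> t})"

definition losers ::
  "nat \<Rightarrow> (nat \<Rightarrow> real) \<Rightarrow> (nat \<Rightarrow> real) \<Rightarrow> real \<Rightarrow>
    (nat \<Rightarrow> real) set \<Rightarrow> (nat \<Rightarrow> real) set \<Rightarrow> (nat \<Rightarrow> real) set"
  where "losers n p w t S0 S1 = {x \<in> S1. best_profit n p w t S0 < dotp n p x}"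

lemma best_profit_attained:
  assumes "finite S" "x0 \<in> S" "dotp n w x0 \<le> t"
  obtains xstar where "xstar \<in> S" "dotp n w xstar \<le> t" "dotp n p xstar = best_profit n p w t S"
proof -
  have "best_profit n p w t S \<in> dotp n p ` {x \<in> S. dotp n w x \<le> t}"
    unfolding best_profit_def using assms by (intro Max_in) auto
  with that show ?thesis by auto
qed

lemma LambdaGen_eq_Min_losers:
  assumes "finite S0" "finite S1" "x0 \<in> S0" "dotp n w x0 \<le> t"
  shows "LambdaGen n p w t S0 S1 =
    (if losers n p w t S0 S1 = {} then \<infinity>
     else ereal (Min (dotp n w ` losers n p w t S0 S1) - t))"
proof -
  let ?L = "losers n p w t S0 S1"
  have "dotp n p (ARG_MAX (dotp n p) x. x \<in> S0 \<and> dotp n w x \<le> t) = best_profit n p w t S0"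
    unfolding best_profit_def using assms by (intro arg_max_value_eq_Max) auto
  then have L: "{x \<in> S1. dotp n p x > dotp n p (ARG_MAX (dotp n p) x. x \<in> S0 \<and> dotp n w x \<le> t)} = ?L"
    by (simp add: losers_def)
  have "dotp n w (ARG_MIN (dotp n w) x. x \<in> ?L) = Min (dotp n w ` ?L)" if "?L \<noteq> {}"
  proof -
    from that obtain a where "a \<in> ?L" by blast
    moreover have "finite ?L" using assms(2) by (simp add: losers_def)
    ultimately show ?thesis using arg_min_value_eq_Min[of "\<lambda>x. x \<in> ?L" a "dotp n w"] by simp
  qed
  then show ?thesis unfolding LambdaGen_def Let_def L by simp
qed

lemma LambdaGen_subcubes_eq:
  assumes "finite S" "S0 \<subseteq> S" "S1 \<subseteq> S"
    and winner: "xstar \<in> S0" "dotp n w xstar \<le> t" "dotp n p xstar = best_profit n p w t S"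
    and loser: "xhat \<in> S1" "xhat \<in> losers n p w t S S"
      "dotp n w xhat = Min (dotp n w ` losers n p w t S S)"
  shows "LambdaGen n p w t S0 S1 = LambdaGen n p w t S S"
proof -
  have finS0: "finite S0" and finS1: "finite S1"
    using assms(1-3) finite_subset by auto
  have "best_profit n p w t S0 = best_profit n p w t S"
    unfolding best_profit_def using assms(1,2) winner
    by (intro Max_image_subset_eq[where a = xstar]) (auto simp: best_profit_def)
  then have L: "losers n p w t S0 S1 = losers n p w t S S \<inter> S1"
    unfolding losers_def using assms(3) by auto
  have finL: "finite (losers n p w t S S)"
    unfolding losers_def using assms(1) by simp
  have "Min (dotp n w ` losers n p w t S0 S1) = Min (dotp n w ` losers n p w t S S)"
    unfolding L using finL loser by (intro Min_image_subset_eq[where a = xhat]) auto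
  moreover have "losers n p w t S0 S1 \<noteq> {}" using L loser by auto
  moreover have "xstar \<in> S" using assms(2) winner(1) by auto
  ultimately show ?thesis
    using LambdaGen_eq_Min_losers[OF finS0 finS1 winner(1,2)]
      LambdaGen_eq_Min_losers[OF assms(1) assms(1) _ winner(2)] L
    by auto
qed

theorem lemma2p6:
  fixes n :: nat and p w :: "nat \<Rightarrow> real" and t :: real
  assumes "\<forall>i<n. p i \<ge> 0" and "\<forall>i<n. w i \<ge> 0" and "t \<ge> 0"
  shows "Lambda n p w t = \<infinity> \<or> (\<exists>i<n. Lambda n p w t = Lambda_i n p w t i)"
proof (cases "Lambda n p w t = \<infinity>")
  case False
  define B where "B = binvecs n"
  define L where "L = losers n p w t B B"
  have finB: "finite B" unfolding B_def by (rule finite_binvecs)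
  have zero: "(\<lambda>_. 0) \<in> B" "dotp n w (\<lambda>_. 0) \<le> t"
    using assms(3) by (auto simp: B_def binvecs_def dotp_def)
  have "L \<noteq> {}"
    using False LambdaGen_eq_Min_losers[OF finB finB zero] by (auto simp: Lambda_def L_def B_def)
  obtain xstar where xstar: "xstar \<in> B" "dotp n w xstar \<le> t" "dotp n p xstar = best_profit n p w t B"
    using best_profit_attained[OF finB zero] .
  have "Min (dotp n w ` L) \<in> dotp n w ` L"
    using \<open>L \<noteq> {}\<close> finB by (intro Min_in) (auto simp: L_def losers_def)
  then obtain xhat where xhat: "xhat \<in> L" "dotp n w xhat = Min (dotp n w ` L)"
    by auto
  then obtain i where i: "i < n" "xstar i = 0" "xhat i = 1"
    using binvecs_dotp_less_imp_coordinate[of xstar n xhat p] xstar assms(1)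
    by (auto simp: L_def losers_def B_def)
  have "Lambda_i n p w t i = Lambda n p w t"
    unfolding Lambda_i_def Lambda_def B_def[symmetric]
    by (rule LambdaGen_subcubes_eq[OF finB _ _ _ xstar(2,3) _ xhat[unfolded L_def]])
      (use xstar xhat i in \<open>auto simp: L_def losers_def\<close>)
  with i(1) show ?thesis by auto
qed simp

end
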